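(* Let $\mathscr{A}$ be the apartment of a maximal split torus of $\mathscr{G}=\mathbf{G}(k)$, where $k$ is a non-archimedean local field and $\mathbf{G}$ is a connected, $k$-split, absolutely quasisimple group of rank $\ell$, and fix a chamber $C_0$ of $\mathscr{A}$. Let $\mathcal{X}=\{\pm\psi_1,\dots,\pm\psi_k\}$ be a permissible set of affine root pairs. Then the number of chambers $D$ of $\mathscr{A}$ which are incident with $\mathcal{X}$ and satisfy $c(D)=\{H_{\pm\psi_i}\cap D: 1\le i\le k\}$ is finite.
   Context: $\Psi$ denotes the affine root system on $\mathscr{A}$; for $\psi\in\Psi$, $H_{\pm\psi}$ is its zero hyperplane. A nonempty set of affine root pairs $\mathcal{X}=\{\pm\psi_1,\dots,\pm\psi_k\}$ is permissible if (choosing one root from each pair) $\mathrm{grad}(\psi_1),\dots,\mathrm{grad}(\psi_k)$ are linearly independent and there exists a chamber $D$ such that each $H_{\pm\psi_i}\cap D$ is a face (codimension-one facet) of $D$; such a chamber $D$ is said to be incident with $\mathcal{X}$. For a chamber $D$, $\mathrm{ht}_{C_0}(D)$ is the number of affine root hyperplanes separating $C_0$ and $D$, and $c(D)$ is the set of faces $F$ of $D$ such that the chamber obtained by reflecting $D$ across $F$ has height $\mathrm{ht}_{C_0}(D)+1$. *)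

theory Defs
  imports "HOL-Analysis.Analysis"
begin

text \<open>The apartment is modelled as a Euclidean space 'a of dimension l (the rank),
with the (finite, reduced, crystallographic, irreducible, spanning) root system R
of the split group identified with vectors via the inner product.\<close>

definition reduced_irreducible_root_system :: "'a::euclidean_space set \<Rightarrow> bool" where
  "reduced_irreducible_root_system R \<longleftrightarrow>
     finite R \<and> 0 \<notin> R \<and> span R = UNIV \<and>
     (\<forall>a\<in>R. \<forall>b\<in>R. b - (2 * (b \<bullet> a) / (a \<bullet> a)) *\<^sub>R a \<in> R) \<and>
     (\<forall>a\<in>R. \<forall>b\<in>R. 2 * (b \<bullet> a) / (a \<bullet> a) \<in> \<int>) \<and>
     (\<forall>a\<in>R. \<forall>c::real. c *\<^sub>R a \<in> R \<longrightarrow> c = 1 \<or> c = -1) \<and>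
     \<not> (\<exists>R1 R2. R1 \<noteq> {} \<and> R2 \<noteq> {} \<and> R1 \<union> R2 = R \<and> R1 \<inter> R2 = {} \<and>
              (\<forall>a\<in>R1. \<forall>b\<in>R2. a \<bullet> b = 0))"

definition affine_roots :: "'a::euclidean_space set \<Rightarrow> ('a \<times> int) set" where
  "affine_roots R = R \<times> UNIV"

definition aff_eval :: "'a::euclidean_space \<times> int \<Rightarrow> 'a \<Rightarrow> real" where
  "aff_eval psi x = fst psi \<bullet> x + real_of_int (snd psi)"

definition grad :: "'a::euclidean_space \<times> int \<Rightarrow> 'a" where
  "grad psi = fst psi"

definition hyp :: "'a::euclidean_space \<times> int \<Rightarrow> 'a set" where
  "hyp psi = {x. aff_eval psi x = 0}"

definition chamber :: "'a::euclidean_space set \<Rightarrow> 'a set \<Rightarrow> bool" where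
  "chamber R D \<longleftrightarrow> D \<in> components (UNIV - (\<Union>psi\<in>affine_roots R. hyp psi))"

definition is_face_hyp :: "'a::euclidean_space set \<Rightarrow> 'a set \<Rightarrow> 'a \<times> int \<Rightarrow> bool" where
  "is_face_hyp R D psi \<longleftrightarrow> psi \<in> affine_roots R \<and>
      aff_dim (hyp psi \<inter> closure D) = int DIM('a) - 1"

definition incident :: "'a::euclidean_space set \<Rightarrow> ('a \<times> int) list \<Rightarrow> 'a set \<Rightarrow> bool" where
  "incident R X D \<longleftrightarrow> chamber R D \<and> (\<forall>psi\<in>set X. is_face_hyp R D psi)"

text \<open>X = [psi_1,...,psi_k] represents the set of pairs {\<plusminus>psi_1,...,\<plusminus>psi_k}
  (one root chosen from each pair).\<close>
definition permissible :: "'a::euclidean_space set \<Rightarrow> ('a \<times> int) list \<Rightarrow> bool" where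
  "permissible R X \<longleftrightarrow> X \<noteq> [] \<and> set X \<subseteq> affine_roots R \<and>
      distinct (map grad X) \<and> independent (set (map grad X)) \<and>
      (\<exists>D. incident R X D)"

definition separates :: "'a::euclidean_space \<times> int \<Rightarrow> 'a set \<Rightarrow> 'a set \<Rightarrow> bool" where
  "separates psi C D \<longleftrightarrow>
     ((\<forall>x\<in>C. aff_eval psi x > 0) \<and> (\<forall>x\<in>D. aff_eval psi x < 0)) \<or>
     ((\<forall>x\<in>C. aff_eval psi x < 0) \<and> (\<forall>x\<in>D. aff_eval psi x > 0))"

definition ht :: "'a::euclidean_space set \<Rightarrow> 'a set \<Rightarrow> 'a set \<Rightarrow> nat" where
  "ht R C0 D = card {H. \<exists>psi\<in>affine_roots R. H = hyp psi \<and> separates psi C0 D}"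

definition aff_refl :: "'a::euclidean_space \<times> int \<Rightarrow> 'a \<Rightarrow> 'a" where
  "aff_refl psi x = x - (2 * aff_eval psi x / (fst psi \<bullet> fst psi)) *\<^sub>R fst psi"

definition cfaces :: "'a::euclidean_space set \<Rightarrow> 'a set \<Rightarrow> 'a set \<Rightarrow> 'a set set" where
  "cfaces R C0 D = {hyp psi \<inter> closure D | psi. is_face_hyp R D psi \<and>
       ht R C0 (aff_refl psi ` D) = ht R C0 D + 1}"

end

theory Submission
  imports Defs
begin

text \<open>The chambers are translates, by the coweight lattice, of finitely many of them, so they all
  have diameter at most some \<delta> and contain balls of some radius r. Let D be a chamber whose faces in
  c(D) lie on the fixed walls H_psi, psi \<in> X, and let x0 \<in> C0. A generic ray from x0 through a point
  y deep inside D leaves D through a point z of a single wall; near z the chamber D lies on the same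
  side of that wall as C0, so reflecting D in it raises the height, and the wall carries a face in
  c(D), hence is some H_psi. As y has distance at least r/2 from H_psi while z \<in> H_psi is within \<delta>
  of y, the distance from x0 to y is bounded in terms of r, \<delta> and the distances from x0 to the
  walls H_psi. Hence all such D meet a fixed ball, and only finitely many chambers do.\<close>

section \<open>Affine functions and reflections\<close>

lemma hyp_eq: "hyp psi = {x. fst psi \<bullet> x = - real_of_int (snd psi)}"
  by (auto simp: hyp_def aff_eval_def)

lemma aff_eval_add: "aff_eval psi (x + v) = aff_eval psi x + fst psi \<bullet> v"
  by (simp add: aff_eval_def inner_add_right)

lemma aff_eval_diff: "aff_eval psi x - aff_eval psi y = fst psi \<bullet> (x - y)"
  by (simp add: aff_eval_def inner_diff_right)

lemma aff_eval_diff_scaleR_grad: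
  "aff_eval psi (x - c *\<^sub>R fst psi) = aff_eval psi x - c * (fst psi \<bullet> fst psi)"
  by (simp add: aff_eval_def inner_diff_right)

lemma aff_eval_convex_comb:
  "u + v = 1 \<Longrightarrow> aff_eval psi (u *\<^sub>R x + v *\<^sub>R y) = u * aff_eval psi x + v * aff_eval psi y"
  by (simp add: aff_eval_def algebra_simps flip: distrib_right)

lemma sgn_convex_comb:
  fixes a b u v :: real
  assumes "0 \<le> u" "0 \<le> v" "u + v = 1" "sgn a = c" "sgn b = c"
  shows "sgn (u * a + v * b) = c"
proof -
  have "u * a + v * b > 0" if "a > 0" "b > 0"
    using assms that by (smt (verit) mult_nonneg_nonneg mult_le_cancel_left1 mult_pos_pos)
  moreover have "u * a + v * b < 0" if "a < 0" "b < 0"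
    using assms that by (smt (verit) mult_nonneg_nonpos mult_neg_neg mult_pos_neg mult_le_0_iff)
  ultimately show ?thesis using assms by (auto simp: sgn_if split: if_splits)
qed

lemma mult_less_0_iff_sgn_eq:
  fixes c u v :: real shows "sgn u = sgn v \<Longrightarrow> c * u < 0 \<longleftrightarrow> c * v < 0"
  by (auto simp: sgn_if mult_less_0_iff split: if_splits)

lemma convex_aff_eval_sgn: "convex {x. sgn (aff_eval psi x) = c}"
  by (rule convexI) (simp add: aff_eval_convex_comb sgn_convex_comb)

lemma continuous_on_aff_eval: "continuous_on S (aff_eval psi)"
  unfolding aff_eval_def by (intro continuous_intros)

lemma aff_eval_zero_on_connected:
  assumes "connected S" "x \<in> S" "y \<in> S" "aff_eval psi x \<le> 0" "0 \<le> aff_eval psi y"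
  shows "\<exists>z\<in>S. aff_eval psi z = 0"
proof -
  have "connected (aff_eval psi ` S)"
    using assms(1) continuous_on_aff_eval by (rule connected_continuous_image[rotated])
  then have "0 \<in> aff_eval psi ` S"
    using assms(2-5) connected_iff_interval[of "aff_eval psi ` S"] by blast
  then show ?thesis by auto
qed

lemma sgn_aff_eval_eq_on_connected:
  assumes "connected S" "x \<in> S" "y \<in> S" "\<forall>z\<in>S. aff_eval psi z \<noteq> 0"
  shows "sgn (aff_eval psi x) = sgn (aff_eval psi y)"
proof -
  have "\<not> (aff_eval psi x < 0 \<and> 0 < aff_eval psi y)" "\<not> (aff_eval psi y < 0 \<and> 0 < aff_eval psi x)"
    using aff_eval_zero_on_connected[OF assms(1-3), of psi]
      aff_eval_zero_on_connected[OF assms(1,3,2), of psi] assms(4) by force+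
  moreover have "aff_eval psi x \<noteq> 0" "aff_eval psi y \<noteq> 0" using assms by auto
  ultimately show ?thesis by (auto simp: sgn_if)
qed

lemma separates_iff_points:
  assumes "connected S" "connected T" "s \<in> S" "t \<in> T"
    and "\<forall>z\<in>S. aff_eval phi z \<noteq> 0" "\<forall>z\<in>T. aff_eval phi z \<noteq> 0"
  shows "separates phi S T \<longleftrightarrow> aff_eval phi s * aff_eval phi t < 0"
proof -
  have "sgn (aff_eval phi x) = sgn (aff_eval phi s)" if "x \<in> S" for x
    using sgn_aff_eval_eq_on_connected assms(1,3,5) that by blast
  then have S: "x \<in> S \<Longrightarrow> (0 < aff_eval phi x \<longleftrightarrow> 0 < aff_eval phi s) \<and>
      (aff_eval phi x < 0 \<longleftrightarrow> aff_eval phi s < 0)" for x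
    by (metis sgn_greater sgn_less)
  have "sgn (aff_eval phi x) = sgn (aff_eval phi t)" if "x \<in> T" for x
    using sgn_aff_eval_eq_on_connected assms(2,4,6) that by blast
  then have T: "x \<in> T \<Longrightarrow> (0 < aff_eval phi x \<longleftrightarrow> 0 < aff_eval phi t) \<and>
      (aff_eval phi x < 0 \<longleftrightarrow> aff_eval phi t < 0)" for x
    by (metis sgn_greater sgn_less)
  show ?thesis
    unfolding separates_def mult_less_0_iff using S T assms(3,4) by meson
qed

context
  fixes psi :: "'a::euclidean_space \<times> int"
  assumes grad_nonzero: "fst psi \<noteq> 0"
begin

lemma aff_eval_aff_refl_self: "aff_eval psi (aff_refl psi x) = - aff_eval psi x"
  using grad_nonzero by (simp add: aff_refl_def aff_eval_diff_scaleR_grad)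

lemma aff_refl_fixes_hyp: "x \<in> hyp psi \<Longrightarrow> aff_refl psi x = x"
  by (simp add: aff_refl_def hyp_def)

lemma dist_aff_refl: "dist (aff_refl psi x) (aff_refl psi y) = dist x y"
proof -
  define a where "a = fst psi"
  define d where "d = x - y"
  define t where "t = 2 * (a \<bullet> d) / (a \<bullet> a)"
  have aa: "a \<bullet> a \<noteq> 0" using grad_nonzero by (simp add: a_def)
  have "2 * aff_eval psi x / (a \<bullet> a) - 2 * aff_eval psi y / (a \<bullet> a) = t"
    using aff_eval_diff[of psi x y]
    by (simp add: t_def a_def d_def flip: diff_divide_distrib right_diff_distrib)
  then have "aff_refl psi x - aff_refl psi y = d - t *\<^sub>R a"
    by (simp add: aff_refl_def d_def a_def algebra_simps flip: scaleR_diff_left)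
  moreover have "(d - t *\<^sub>R a) \<bullet> (d - t *\<^sub>R a) = d \<bullet> d"
    using aa by (simp add: t_def inner_diff_left inner_diff_right inner_commute field_simps)
  ultimately show ?thesis by (simp add: dist_norm norm_eq_sqrt_inner d_def)
qed

lemma continuous_on_aff_refl: "continuous_on S (aff_refl psi)"
  unfolding aff_refl_def aff_eval_def using grad_nonzero by (intro continuous_intros) simp

lemma hyp_eq_imp_aff_eval_proportional:
  assumes "fst phi \<noteq> 0" "hyp phi = hyp psi"
  shows "\<exists>c. c \<noteq> 0 \<and> (\<forall>x. aff_eval phi x = c * aff_eval psi x)"
proof -
  define a where "a = fst psi"
  have aa: "a \<bullet> a \<noteq> 0" using grad_nonzero by (simp add: a_def)
  define c where "c = (fst phi \<bullet> a) / (a \<bullet> a)"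
  \<comment> \<open>the foot of x on hyp psi also lies on hyp phi\<close>
  have proportional: "aff_eval phi x = c * aff_eval psi x" for x
  proof -
    define y where "y = x - (aff_eval psi x / (a \<bullet> a)) *\<^sub>R a"
    have "y \<in> hyp psi"
      using aa by (simp add: hyp_def y_def a_def aff_eval_diff_scaleR_grad)
    then have "aff_eval phi y = 0" using assms(2) unfolding hyp_def by blast
    moreover have "aff_eval phi y = aff_eval phi x - (aff_eval psi x / (a \<bullet> a)) * (fst phi \<bullet> a)"
      using aff_eval_diff[of phi x y] by (simp add: y_def algebra_simps)
    ultimately show ?thesis using aa by (simp add: c_def field_simps)
  qed
  have "c \<noteq> 0"
  proof
    assume "c = 0"
    then have "aff_eval phi x = aff_eval phi 0" for x using proportional by simp
    then have "fst phi \<bullet> fst phi = 0" using aff_eval_diff[of phi "fst phi" 0] by (metis diff_self diff_zero)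
    then show False using assms(1) by simp
  qed
  then show ?thesis using proportional by blast
qed

lemma aff_eval_mult_aff_refl_same_hyp:
  assumes "fst phi \<noteq> 0" "hyp phi = hyp psi" "aff_eval psi x * aff_eval psi w > 0"
  shows "aff_eval phi x * aff_eval phi (aff_refl psi w) < 0" "aff_eval phi x * aff_eval phi w > 0"
proof -
  obtain c where c: "c \<noteq> 0" "\<forall>y. aff_eval phi y = c * aff_eval psi y"
    using hyp_eq_imp_aff_eval_proportional[OF assms(1,2)] by blast
  have "c\<^sup>2 * (aff_eval psi x * aff_eval psi w) > 0" using c(1) assms(3) by simp
  moreover have "aff_eval phi x * aff_eval phi w = c\<^sup>2 * (aff_eval psi x * aff_eval psi w)"
    "aff_eval phi x * aff_eval phi (aff_refl psi w) = - (c\<^sup>2 * (aff_eval psi x * aff_eval psi w))"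
    using c(2) aff_eval_aff_refl_self by (simp_all add: power2_eq_square algebra_simps)
  ultimately show "aff_eval phi x * aff_eval phi (aff_refl psi w) < 0" "aff_eval phi x * aff_eval phi w > 0"
    by linarith+
qed

end

lemma aff_eval_ray:
  "aff_eval psi (x0 + t *\<^sub>R (y - x0)) = (1 - t) * aff_eval psi x0 + t * aff_eval psi y"
  using aff_eval_convex_comb[of "1 - t" t psi x0 y] by (simp add: algebra_simps)

lemma aff_eval_nonneg_before_ray_zero:
  assumes "s \<ge> 1" "aff_eval psi (x0 + s *\<^sub>R (y - x0)) = 0"
  shows "aff_eval psi x0 * aff_eval psi y \<ge> 0"
proof -
  have "s * aff_eval psi y = (s - 1) * aff_eval psi x0"
    using assms(2) unfolding aff_eval_ray by (simp add: algebra_simps)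
  then have "s * (aff_eval psi x0 * aff_eval psi y) = (s - 1) * (aff_eval psi x0)\<^sup>2"
    by (metis mult.left_commute power2_eq_square)
  moreover have "(s - 1) * (aff_eval psi x0)\<^sup>2 \<ge> 0" using assms(1) by simp
  ultimately have "s * (aff_eval psi x0 * aff_eval psi y) \<ge> 0" by simp
  then show ?thesis using assms(1) mult_pos_neg[of s "aff_eval psi x0 * aff_eval psi y"] by linarith
qed

lemma aff_eval_ge_if_ball_misses_hyp:
  assumes "fst psi \<noteq> 0" "hyp psi \<inter> ball y e = {}"
  shows "norm (fst psi) * e \<le> \<bar>aff_eval psi y\<bar>"
proof (rule ccontr)
  define a where "a = fst psi"
  have na: "norm a > 0" using assms(1) by (simp add: a_def)
  assume "\<not> ?thesis"
  then have lt: "\<bar>aff_eval psi y\<bar> < norm a * e" by (simp add: a_def)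
  define y' where "y' = y - (aff_eval psi y / (a \<bullet> a)) *\<^sub>R a"
  have "y' \<in> hyp psi"
    using na by (simp add: hyp_def y'_def a_def aff_eval_diff_scaleR_grad)
  moreover have "dist y y' = \<bar>aff_eval psi y\<bar> / norm a"
    using na by (simp add: y'_def dist_norm dot_square_norm power2_eq_square)
  then have "dist y y' < e" using lt na by (simp add: divide_less_eq mult.commute)
  ultimately show False using assms(2) by auto
qed

lemma aff_eval_pos_eq_halfspace:
  "{x. 0 < c * aff_eval psi x} = {x. - (c * real_of_int (snd psi)) < (c *\<^sub>R fst psi) \<bullet> x}"
  by (auto simp: aff_eval_def algebra_simps)

lemma convex_aff_eval_pos: "convex {x. 0 < c * aff_eval psi x}"
  unfolding aff_eval_pos_eq_halfspace by (rule convex_halfspace_gt)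

lemma hyp_Int_open_subset_closure_side:
  assumes "fst psi \<noteq> 0" "c \<noteq> 0" "open U"
  shows "hyp psi \<inter> U \<subseteq> closure (U \<inter> {x. 0 < c * aff_eval psi x})"
proof -
  have "closure {x. 0 < c * aff_eval psi x}
      = {x. - (c * real_of_int (snd psi)) \<le> (c *\<^sub>R fst psi) \<bullet> x}"
    unfolding aff_eval_pos_eq_halfspace using assms(1,2) by (intro closure_halfspace_gt) simp
  moreover have "hyp psi \<subseteq> {x. - (c * real_of_int (snd psi)) \<le> (c *\<^sub>R fst psi) \<bullet> x}"
    by (auto simp: hyp_eq)
  ultimately have "hyp psi \<subseteq> closure {x. 0 < c * aff_eval psi x}" by simp
  then show ?thesis using open_Int_closure_subset[OF assms(3)] by blast
qed

section \<open>Rays\<close>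

lemma negligible_rays_through_hyp_Int:
  fixes phi phi' :: "'a::euclidean_space \<times> int"
  assumes x0: "x0 \<notin> hyp phi" "x0 \<notin> hyp phi'" and ne: "hyp phi \<noteq> hyp phi'"
  shows "negligible {y. \<exists>s. x0 + s *\<^sub>R (y - x0) \<in> hyp phi \<inter> hyp phi'}" (is "negligible ?Bad")
proof (cases "?Bad = {}")
  case True
  then show ?thesis by (metis negligible_empty)
next
  case False
  then obtain q where q: "q \<in> hyp phi \<inter> hyp phi'" by blast
  define a where "a = fst phi"
  define b where "b = fst phi'"
  define \<alpha> where "\<alpha> = - real_of_int (snd phi)"
  define \<beta> where "\<beta> = - real_of_int (snd phi')"
  have h1: "hyp phi = {x. a \<bullet> x = \<alpha>}" and h2: "hyp phi' = {x. b \<bullet> x = \<beta>}"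
    by (simp_all add: hyp_eq a_def b_def \<alpha>_def \<beta>_def)
  have qa: "a \<bullet> q = \<alpha>" and qb: "b \<bullet> q = \<beta>" using q h1 h2 by auto
  have x0a: "\<alpha> - a \<bullet> x0 \<noteq> 0" using x0(1) h1 by auto
  \<comment> \<open>g is normal to the hyperplane through x0 containing the intersection of both walls\<close>
  define g where "g = (\<alpha> - a \<bullet> x0) *\<^sub>R b - (\<beta> - b \<bullet> x0) *\<^sub>R a"
  have "g \<noteq> 0"
  proof
    assume "g = 0"
    define l where "l = (\<beta> - b \<bullet> x0) / (\<alpha> - a \<bullet> x0)"
    have bl: "b = l *\<^sub>R a"
      using \<open>g = 0\<close> x0a by (simp add: g_def l_def field_simps eq_vector_fraction_iff)
    then have "\<beta> = l * \<alpha>" using qa qb by simp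
    moreover have "l \<noteq> 0" using bl \<open>\<beta> = l * \<alpha>\<close> x0(2) h2 by auto
    ultimately have "hyp phi' = hyp phi" unfolding h1 h2 using bl by auto
    then show False using ne by simp
  qed
  have "?Bad \<subseteq> {y. g \<bullet> y = g \<bullet> x0}"
  proof
    fix y assume "y \<in> ?Bad"
    define u where "u = y - x0"
    obtain s where "x0 + s *\<^sub>R u \<in> hyp phi \<inter> hyp phi'" using \<open>y \<in> ?Bad\<close> by (auto simp: u_def)
    then have ea: "\<alpha> - a \<bullet> x0 = s * (a \<bullet> u)" and eb: "\<beta> - b \<bullet> x0 = s * (b \<bullet> u)"
      using h1 h2 by (auto simp: inner_add_right)
    have "g \<bullet> u = 0"
      unfolding g_def inner_diff_left inner_scaleR_left ea eb by (simp add: algebra_simps)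
    then show "y \<in> {y. g \<bullet> y = g \<bullet> x0}" by (simp add: u_def inner_diff_right)
  qed
  moreover have "negligible {y. g \<bullet> y = g \<bullet> x0}"
    using \<open>g \<noteq> 0\<close> by (simp add: negligible_hyperplane)
  ultimately show ?thesis by (rule negligible_subset[rotated])
qed

lemma exists_generic_ray:
  fixes Phi :: "('a::euclidean_space \<times> int) set"
  assumes "finite Phi" "\<forall>phi\<in>Phi. x0 \<notin> hyp phi" "open U" "U \<noteq> {}"
  shows "\<exists>y\<in>U. \<forall>phi\<in>Phi. \<forall>phi'\<in>Phi. \<forall>s.
           x0 + s *\<^sub>R (y - x0) \<in> hyp phi \<inter> hyp phi' \<longrightarrow> hyp phi = hyp phi'"
proof -
  define Pairs where "Pairs = {p \<in> Phi \<times> Phi. hyp (fst p) \<noteq> hyp (snd p)}"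
  define Bad where "Bad p = {y. \<exists>s. x0 + s *\<^sub>R (y - x0) \<in> hyp (fst p) \<inter> hyp (snd p)}" for p
  have "negligible (\<Union>(Bad ` Pairs))"
  proof (rule negligible_Union)
    show "finite (Bad ` Pairs)" using assms(1) by (simp add: Pairs_def)
  next
    fix T assume "T \<in> Bad ` Pairs"
    then obtain p where p: "p \<in> Pairs" "T = Bad p" by blast
    then have "x0 \<notin> hyp (fst p)" "x0 \<notin> hyp (snd p)" "hyp (fst p) \<noteq> hyp (snd p)"
      using assms(2) by (auto simp: Pairs_def)
    then show "negligible T" unfolding p(2) Bad_def by (rule negligible_rays_through_hyp_Int)
  qed
  moreover have "\<not> negligible U" using assms(3,4) by (rule open_not_negligible)
  ultimately obtain y where y: "y \<in> U" "y \<notin> \<Union>(Bad ` Pairs)" by (metis negligible_subset subsetI)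
  have "hyp phi = hyp phi'"
    if "phi \<in> Phi" "phi' \<in> Phi" "x0 + s *\<^sub>R (y - x0) \<in> hyp phi \<inter> hyp phi'" for phi phi' s
  proof (rule ccontr)
    assume "hyp phi \<noteq> hyp phi'"
    then have "(phi, phi') \<in> Pairs" using that by (simp add: Pairs_def)
    moreover have "y \<in> Bad (phi, phi')" using that by (auto simp: Bad_def)
    ultimately show False using y(2) by blast
  qed
  then show ?thesis using y(1) by blast
qed

lemma ray_exits_through_frontier:
  fixes S :: "'a::real_normed_vector set"
  assumes "open S" "bounded S" "y \<in> S" "x0 \<notin> S"
  shows "\<exists>s>1. x0 + s *\<^sub>R (y - x0) \<in> frontier S"
proof -
  define d where "d = y - x0"
  have nd: "norm d > 0" using assms(3,4) by (auto simp: d_def)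
  obtain K where K: "\<forall>x\<in>S. norm x \<le> K" using assms(2) bounded_iff by blast
  have "norm y \<le> K" using K assms(3) by blast
  then have "K + norm x0 + 1 > 0" using norm_ge_zero[of y] norm_ge_zero[of x0] by linarith
  define t0 where "t0 = (K + norm x0 + 1) / norm d + 1"
  have t0: "t0 > 1" using \<open>K + norm x0 + 1 > 0\<close> nd by (simp add: t0_def)
  have "norm (t0 *\<^sub>R d) \<le> norm (x0 + t0 *\<^sub>R d) + norm x0"
    using norm_triangle_ineq4[of "x0 + t0 *\<^sub>R d" x0] by simp
  moreover have "norm (t0 *\<^sub>R d) = t0 * norm d" using t0 by simp
  moreover have "t0 * norm d = K + norm x0 + 1 + norm d" using nd by (simp add: t0_def field_simps)
  ultimately have "norm (x0 + t0 *\<^sub>R d) > K" using nd by linarith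
  then have out: "x0 + t0 *\<^sub>R d \<notin> S" using K by (meson not_le)
  define L where "L = (\<lambda>t. x0 + t *\<^sub>R d) ` {1..t0}"
  have "connected L" unfolding L_def by (intro connected_continuous_image continuous_intros) simp
  moreover have "y \<in> L" unfolding L_def using t0 by (intro image_eqI[of _ _ 1]) (auto simp: d_def)
  moreover have "x0 + t0 *\<^sub>R d \<in> L" unfolding L_def using t0 by auto
  ultimately have "L \<inter> frontier S \<noteq> {}"
    using connected_Int_frontier[of L S] assms(3) out by blast
  then obtain t where t: "t \<in> {1..t0}" "x0 + t *\<^sub>R d \<in> frontier S" unfolding L_def by blast
  moreover have "y \<notin> frontier S" using assms(1,3) by (simp add: frontier_def interior_open)
  then have "t \<noteq> 1" using t(2) by (auto simp: d_def)
  ultimately show ?thesis unfolding d_def by (intro exI[of _ t]) auto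
qed

lemma ray_through_hyp_dist_bound:
  assumes a: "fst psi \<noteq> 0" and miss: "hyp psi \<inter> ball y e = {}" and s: "s > 1"
    and z: "x0 + s *\<^sub>R (y - x0) \<in> hyp psi" and diam: "dist y (x0 + s *\<^sub>R (y - x0)) \<le> \<delta>"
  shows "dist x0 y * e \<le> \<delta> * (\<delta> + \<bar>aff_eval psi x0\<bar> / norm (fst psi))"
proof -
  define a where "a = fst psi"
  define d where "d = y - x0"
  have na: "norm a > 0" using a by (simp add: a_def)
  have "aff_eval psi y = (1 - s) * (a \<bullet> d)"
    using z aff_eval_add[of psi y "(s - 1) *\<^sub>R d"]
    by (simp add: hyp_def a_def d_def algebra_simps)
  then have ay: "\<bar>aff_eval psi y\<bar> = (s - 1) * \<bar>a \<bullet> d\<bar>" using s by (simp add: abs_mult)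
  have "y - (x0 + s *\<^sub>R d) = (1 - s) *\<^sub>R d" by (simp add: d_def algebra_simps)
  then have sd: "(s - 1) * norm d \<le> \<delta>" using diam s by (simp add: dist_norm d_def)
  have "\<bar>aff_eval psi y\<bar> \<le> norm a * \<delta>"
    using ay Cauchy_Schwarz_ineq2[of a d] sd s na
    by (smt (verit) mult.assoc mult.left_commute mult_left_mono norm_ge_zero)
  then have ad: "\<bar>a \<bullet> d\<bar> \<le> norm a * \<delta> + \<bar>aff_eval psi x0\<bar>"
    using aff_eval_diff[of psi y x0] by (simp add: a_def d_def)
  have "norm a * e * norm d \<le> (s - 1) * \<bar>a \<bullet> d\<bar> * norm d"
    using aff_eval_ge_if_ball_misses_hyp[OF a miss] ay by (simp add: a_def mult_right_mono)
  also have "\<dots> \<le> \<delta> * \<bar>a \<bullet> d\<bar>"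
    using mult_right_mono[OF sd, of "\<bar>a \<bullet> d\<bar>"] by (simp add: mult_ac)
  also have "\<dots> \<le> \<delta> * (norm a * \<delta> + \<bar>aff_eval psi x0\<bar>)"
    using ad sd s by (smt (verit) mult_left_mono mult_nonneg_nonneg norm_ge_zero)
  also have "\<dots> = norm a * (\<delta> * (\<delta> + \<bar>aff_eval psi x0\<bar> / norm a))"
    using na by (simp add: field_simps)
  finally have "norm a * (norm d * e) \<le> norm a * (\<delta> * (\<delta> + \<bar>aff_eval psi x0\<bar> / norm a))"
    by (simp add: mult_ac)
  then show ?thesis using na by (simp add: a_def dist_norm d_def norm_minus_commute mult_le_cancel_left_pos)
qed

section \<open>Chambers\<close>

locale root_system =
  fixes R :: "'a::euclidean_space set"
  assumes reduced_irreducible: "reduced_irreducible_root_system R"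
begin

lemma finite_roots: "finite R"
  and zero_notin_roots: "0 \<notin> R"
  and span_roots: "span R = UNIV"
  and reflect_root: "a \<in> R \<Longrightarrow> b \<in> R \<Longrightarrow> b - (2 * (b \<bullet> a) / (a \<bullet> a)) *\<^sub>R a \<in> R"
  and cartan_integer: "a \<in> R \<Longrightarrow> b \<in> R \<Longrightarrow> 2 * (b \<bullet> a) / (a \<bullet> a) \<in> \<int>"
  using reduced_irreducible unfolding reduced_irreducible_root_system_def
  by (elim conjE; simp only: Ball_def)+

lemma mem_affine_roots [simp]: "psi \<in> affine_roots R \<longleftrightarrow> fst psi \<in> R"
  by (cases psi) (simp add: affine_roots_def)

lemma affine_root_grad_nonzero: "psi \<in> affine_roots R \<Longrightarrow> fst psi \<noteq> 0"
  using zero_notin_roots by auto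

definition walls :: "'a set" where
  "walls = (\<Union>psi\<in>affine_roots R. hyp psi)"

lemma mem_walls: "x \<in> walls \<longleftrightarrow> (\<exists>psi\<in>affine_roots R. aff_eval psi x = 0)"
  by (simp add: walls_def hyp_def)

lemma walls_eq: "walls = (\<Union>a\<in>R. {x. a \<bullet> x \<in> \<int>})"
proof (intro set_eqI iffI)
  fix x assume "x \<in> walls"
  then obtain a n where "a \<in> R" "a \<bullet> x = - of_int n" by (auto simp: walls_def hyp_eq)
  moreover have "a \<bullet> x \<in> \<int>" using \<open>a \<bullet> x = - of_int n\<close> by (metis Ints_minus Ints_of_int)
  ultimately show "x \<in> (\<Union>a\<in>R. {x. a \<bullet> x \<in> \<int>})" by blast
next
  fix x assume "x \<in> (\<Union>a\<in>R. {x. a \<bullet> x \<in> \<int>})"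
  then obtain a n where "a \<in> R" "a \<bullet> x = of_int n" by (auto elim: Ints_cases)
  then have "(a, -n) \<in> affine_roots R" "x \<in> hyp (a, -n)" by (simp_all add: hyp_eq)
  then show "x \<in> walls" unfolding walls_def by blast
qed

lemma closed_walls: "closed walls"
proof -
  have "closed ((\<lambda>x. a \<bullet> x) -` \<int>)" for a :: 'a
    by (intro continuous_closed_vimage closed_Ints continuous_intros)
  then show ?thesis unfolding walls_eq vimage_def using finite_roots by (intro closed_UN) auto
qed

lemma chamber_iff_component: "chamber R D \<longleftrightarrow> D \<in> components (- walls)"
  by (simp add: chamber_def walls_def Compl_eq_Diff_UNIV)

lemma chamber_subset: "chamber R D \<Longrightarrow> D \<subseteq> - walls"
  unfolding chamber_iff_component by (rule in_components_subset)

lemma connected_chamber: "chamber R D \<Longrightarrow> connected D"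
  unfolding chamber_iff_component by (rule in_components_connected)

lemma chamber_nonempty: "chamber R D \<Longrightarrow> D \<noteq> {}"
  unfolding chamber_iff_component by (rule in_components_nonempty)

lemma open_chamber: "chamber R D \<Longrightarrow> open D"
  unfolding chamber_iff_component using closed_walls by (metis open_Compl open_components)

lemma chamber_aff_eval_nonzero:
  "chamber R D \<Longrightarrow> psi \<in> affine_roots R \<Longrightarrow> x \<in> D \<Longrightarrow> aff_eval psi x \<noteq> 0"
  using chamber_subset mem_walls by blast

definition sign_class :: "'a \<Rightarrow> 'a set" where
  "sign_class p = {x. \<forall>psi\<in>affine_roots R. sgn (aff_eval psi x) = sgn (aff_eval psi p)}"

lemma convex_sign_class: "convex (sign_class p)"
  unfolding sign_class_def Collect_ball_eq by (intro convex_INT ballI convex_aff_eval_sgn)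

lemma sign_class_subset:
  assumes "p \<notin> walls" shows "sign_class p \<subseteq> - walls"
proof
  fix x assume x: "x \<in> sign_class p"
  show "x \<in> - walls"
  proof
    assume "x \<in> walls"
    then obtain psi where psi: "psi \<in> affine_roots R" "aff_eval psi x = 0" by (auto simp: mem_walls)
    moreover have "sgn (aff_eval psi x) = sgn (aff_eval psi p)"
      using x psi(1) unfolding sign_class_def by blast
    ultimately have "aff_eval psi p = 0" by (simp add: sgn_0_0)
    then have "p \<in> walls" using psi(1) unfolding mem_walls by blast
    then show False using assms by contradiction
  qed
qed

lemma connected_subset_sign_class:
  assumes "connected S" "S \<subseteq> - walls" "p \<in> S"
  shows "S \<subseteq> sign_class p"
proof
  fix x assume "x \<in> S"
  show "x \<in> sign_class p" unfolding sign_class_def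
  proof (intro CollectI ballI)
    fix psi assume "psi \<in> affine_roots R"
    then have "\<forall>z\<in>S. aff_eval psi z \<noteq> 0" using assms(2) by (auto simp: mem_walls)
    then show "sgn (aff_eval psi x) = sgn (aff_eval psi p)"
      using sgn_aff_eval_eq_on_connected assms(1,3) \<open>x \<in> S\<close> by blast
  qed
qed

lemma sign_class_eq_component:
  assumes "p \<notin> walls" shows "sign_class p = connected_component_set (- walls) p"
proof
  have "p \<in> sign_class p" by (simp add: sign_class_def)
  then show "sign_class p \<subseteq> connected_component_set (- walls) p"
    by (intro connected_component_maximal convex_connected convex_sign_class sign_class_subset assms)
  show "connected_component_set (- walls) p \<subseteq> sign_class p"
    by (intro connected_subset_sign_class connected_connected_component connected_component_subset)
      (simp add: assms)
qed

lemma chamber_sign_class: "p \<notin> walls \<Longrightarrow> chamber R (sign_class p)"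
  unfolding chamber_iff_component components_iff using sign_class_eq_component by blast

lemma chamber_eq_sign_class:
  assumes "chamber R D" "p \<in> D" shows "D = sign_class p"
proof -
  have "p \<notin> walls" using assms chamber_subset by blast
  moreover obtain x where "D = connected_component_set (- walls) x"
    using assms(1) unfolding chamber_iff_component components_iff by blast
  ultimately show ?thesis
    using assms(2) sign_class_eq_component by (metis connected_component_eq mem_Collect_eq)
qed

lemma chamber_eqI: "chamber R D \<Longrightarrow> chamber R D' \<Longrightarrow> x \<in> D \<Longrightarrow> x \<in> D' \<Longrightarrow> D = D'"
  using chamber_eq_sign_class by metis

lemma frontier_chamber_subset_walls:
  assumes D: "chamber R D" shows "frontier D \<subseteq> walls"
proof
  fix z assume z: "z \<in> frontier D"
  show "z \<in> walls"
  proof (rule ccontr)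
    assume "z \<notin> walls"
    then have Dz: "chamber R (sign_class z)" by (rule chamber_sign_class)
    have "z \<in> sign_class z" by (simp add: sign_class_def)
    then have "sign_class z \<inter> D \<noteq> {}"
      using z open_Int_closure_eq_empty[OF open_chamber[OF Dz], of D] by (auto simp: frontier_def)
    then have "sign_class z = D" using chamber_eqI[OF Dz D] by blast
    then show False using z \<open>z \<in> sign_class z\<close> open_chamber[OF D] by (simp add: frontier_def interior_open)
  qed
qed

section \<open>Translations by the coweight lattice and uniform bounds\<close>

definition in_coweight_lattice :: "'a \<Rightarrow> bool" where
  "in_coweight_lattice v \<longleftrightarrow> (\<forall>a\<in>R. a \<bullet> v \<in> \<int>)"

lemma in_coweight_lattice_uminus: "in_coweight_lattice v \<Longrightarrow> in_coweight_lattice (- v)"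
  by (simp add: in_coweight_lattice_def)

lemma translate_mem_walls:
  assumes "in_coweight_lattice v" shows "v + x \<in> walls \<longleftrightarrow> x \<in> walls"
proof -
  have "a \<bullet> (v + x) \<in> \<int> \<longleftrightarrow> a \<bullet> x \<in> \<int>" if "a \<in> R" for a
  proof -
    have "a \<bullet> v \<in> \<int>" using assms that by (simp add: in_coweight_lattice_def)
    then show ?thesis
      by (metis Ints_add Ints_diff add_diff_cancel_left' inner_add_right)
  qed
  then show ?thesis unfolding walls_eq by blast
qed

lemma translate_chamber_subset:
  assumes v: "in_coweight_lattice v" and D: "chamber R D" "p \<in> D"
  shows "(+) v ` D \<subseteq> sign_class (v + p)"
proof (rule connected_subset_sign_class)
  show "connected ((+) v ` D)"
    using connected_chamber[OF D(1)] by (intro connected_continuous_image continuous_intros)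
  show "(+) v ` D \<subseteq> - walls" using chamber_subset[OF D(1)] translate_mem_walls[OF v] by auto
qed (use D(2) in blast)

lemma chamber_translate:
  assumes v: "in_coweight_lattice v" and D: "chamber R D"
  shows "chamber R ((+) v ` D)"
proof -
  obtain p where p: "p \<in> D" using chamber_nonempty[OF D] by blast
  have vp: "v + p \<notin> walls" using chamber_subset[OF D] p translate_mem_walls[OF v] by auto
  have "sign_class (v + p) \<subseteq> (+) v ` D"
  proof
    fix y assume y: "y \<in> sign_class (v + p)"
    have "v + p \<in> sign_class (v + p)" unfolding sign_class_def by blast
    then have "(+) (- v) ` sign_class (v + p) \<subseteq> sign_class (- v + (v + p))"
      by (rule translate_chamber_subset[OF in_coweight_lattice_uminus[OF v] chamber_sign_class[OF vp]])
    then have "- v + y \<in> D" using y chamber_eq_sign_class[OF D p] by auto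
    then show "y \<in> (+) v ` D" by (auto intro!: image_eqI[of _ _ "- v + y"])
  qed
  then have "(+) v ` D = sign_class (v + p)" using translate_chamber_subset[OF v D p] by blast
  then show ?thesis using chamber_sign_class[OF vp] by simp
qed

lemma norm_bounded_by_root_coordinates: "\<exists>K. \<forall>y. (\<forall>a\<in>R. \<bar>a \<bullet> y\<bar> \<le> 1) \<longrightarrow> norm y \<le> K"
proof -
  have "\<forall>e\<in>Basis. \<exists>u. e = (\<Sum>a\<in>R. u a *\<^sub>R a)"
    using span_roots span_finite[OF finite_roots] by auto
  then obtain U where U: "\<forall>e\<in>Basis. e = (\<Sum>a\<in>R. U e a *\<^sub>R a)" by metis
  define K where "K = (\<Sum>e\<in>(Basis::'a set). \<Sum>a\<in>R. \<bar>U e a\<bar>)"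
  have "norm y \<le> K" if y: "\<forall>a\<in>R. \<bar>a \<bullet> y\<bar> \<le> 1" for y
  proof -
    have "\<bar>y \<bullet> e\<bar> \<le> (\<Sum>a\<in>R. \<bar>U e a\<bar>)" if e: "e \<in> Basis" for e
    proof -
      have "y \<bullet> e = (\<Sum>a\<in>R. U e a * (a \<bullet> y))"
        using U e by (metis (no_types, lifting) inner_scaleR_right inner_sum_right inner_commute sum.cong)
      also have "\<bar>\<dots>\<bar> \<le> (\<Sum>a\<in>R. \<bar>U e a\<bar>)"
        using y by (intro order_trans[OF sum_abs] sum_mono) (simp add: abs_mult mult_left_le)
      finally show ?thesis .
    qed
    then have "(\<Sum>e\<in>Basis. \<bar>y \<bullet> e\<bar>) \<le> K" unfolding K_def by (rule sum_mono)
    then show ?thesis using norm_le_l1[of y] by linarith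
  qed
  then show ?thesis by blast
qed

text \<open>The chamber of p lies between the walls {a \<bullet> x = \<lfloor>a \<bullet> p\<rfloor>} and {a \<bullet> x = \<lfloor>a \<bullet> p\<rfloor> + 1}.\<close>
lemma chamber_root_coordinate_diff:
  assumes D: "chamber R D" and "p \<in> D" "x \<in> D" "a \<in> R"
  shows "\<bar>a \<bullet> x - a \<bullet> p\<bar> < 1"
proof -
  define f where "f = \<lfloor>a \<bullet> p\<rfloor>"
  have fp: "of_int f \<le> a \<bullet> p" "a \<bullet> p < of_int f + 1" by (simp_all add: f_def)
  have ev: "aff_eval (a, -f) y = a \<bullet> y - of_int f" "aff_eval (a, -f - 1) y = a \<bullet> y - of_int f - 1" for y
    by (simp_all add: aff_eval_def)
  have roots: "(a, -f) \<in> affine_roots R" "(a, -f - 1) \<in> affine_roots R" using assms(4) by simp_all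
  have "sgn (aff_eval psi x) = sgn (aff_eval psi p)" if "psi \<in> affine_roots R" for psi
    using chamber_aff_eval_nonzero[OF D that] connected_chamber[OF D] assms(2,3)
    by (intro sgn_aff_eval_eq_on_connected) auto
  moreover have "aff_eval (a, -f) p > 0"
    using chamber_aff_eval_nonzero[OF D roots(1) assms(2)] fp ev(1)[of p] by linarith
  moreover have "aff_eval (a, -f - 1) p < 0" using fp ev(2)[of p] by linarith
  ultimately have "aff_eval (a, -f) x > 0" "aff_eval (a, -f - 1) x < 0"
    using roots by (metis sgn_greater sgn_less)+
  then show ?thesis using fp ev[of x] by linarith
qed

lemma chamber_subset_cball: "\<exists>K. \<forall>D p. chamber R D \<longrightarrow> p \<in> D \<longrightarrow> D \<subseteq> cball p K"
proof -
  obtain K where K: "\<And>y. \<forall>a\<in>R. \<bar>a \<bullet> y\<bar> \<le> 1 \<Longrightarrow> norm y \<le> K"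
    using norm_bounded_by_root_coordinates by blast
  have "dist p x \<le> K" if "chamber R D" "p \<in> D" "x \<in> D" for D p x
    using chamber_root_coordinate_diff[OF that] K[of "x - p"]
    by (simp add: dist_norm norm_minus_commute inner_diff_right less_imp_le)
  then show ?thesis by (meson mem_cball subsetI)
qed

lemma bounded_chamber: "chamber R D \<Longrightarrow> bounded D"
  using chamber_subset_cball chamber_nonempty by (meson bounded_cball bounded_subset ex_in_conv)

lemma chamber_closure_diameter_bound:
  "\<exists>\<delta>. \<forall>D. chamber R D \<longrightarrow> (\<forall>x\<in>closure D. \<forall>y\<in>closure D. dist x y \<le> \<delta>)"
proof -
  obtain K where K: "\<And>D p. chamber R D \<Longrightarrow> p \<in> D \<Longrightarrow> closure D \<subseteq> cball p K"
    using chamber_subset_cball by (meson closed_cball closure_minimal)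
  have "dist x y \<le> 2 * K" if D: "chamber R D" and xy: "x \<in> closure D" "y \<in> closure D" for D x y
  proof -
    obtain p where "p \<in> D" using chamber_nonempty[OF D] by blast
    then have "dist p x \<le> K" "dist p y \<le> K" using K[OF D] xy by (auto simp: subset_iff)
    then show ?thesis using dist_triangle3[of x y p] by linarith
  qed
  then show ?thesis by blast
qed

lemma finite_affine_roots_meeting:
  assumes "bounded B" shows "finite {psi \<in> affine_roots R. hyp psi \<inter> B \<noteq> {}}"
proof -
  obtain M where M: "\<forall>x\<in>B. norm x \<le> M" using assms bounded_iff by blast
  define N where "N = \<lceil>(\<Sum>a\<in>R. norm a) * \<bar>M\<bar>\<rceil>"
  have "{psi \<in> affine_roots R. hyp psi \<inter> B \<noteq> {}} \<subseteq> R \<times> {-N..N}"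
  proof clarify
    fix a n assume "(a, n) \<in> affine_roots R" "hyp (a, n) \<inter> B \<noteq> {}"
    then obtain x where x: "x \<in> B" "a \<bullet> x = - of_int n" and a: "a \<in> R" by (auto simp: hyp_eq)
    have "norm a \<le> (\<Sum>a\<in>R. norm a)" using a finite_roots by (intro member_le_sum) auto
    moreover have "\<bar>of_int n\<bar> \<le> norm a * norm x" using x(2) Cauchy_Schwarz_ineq2[of a x] by simp
    ultimately have "\<bar>real_of_int n\<bar> \<le> (\<Sum>a\<in>R. norm a) * \<bar>M\<bar>"
      using M x(1) by (smt (verit) mult_mono norm_ge_zero)
    then have "n \<le> N" "- n \<le> N" unfolding N_def le_ceiling_iff by auto
    then show "a \<in> R \<and> n \<in> {-N..N}" using a by auto
  qed
  moreover have "finite (R \<times> {-N..N})" using finite_roots by simp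
  ultimately show ?thesis by (rule finite_subset)
qed

text \<open>Chambers meeting the ball are told apart by the signs, at a point of each in the ball, of the
  finitely many affine roots whose walls meet the ball.\<close>
lemma finite_chambers_meeting_ball: "finite {D. chamber R D \<and> D \<inter> ball c M \<noteq> {}}"
proof -
  define Ch where "Ch = {D. chamber R D \<and> D \<inter> ball c M \<noteq> {}}"
  define Phi where "Phi = {psi \<in> affine_roots R. hyp psi \<inter> ball c M \<noteq> {}}"
  have "finite Phi" unfolding Phi_def by (rule finite_affine_roots_meeting) simp
  define pt where "pt D = (SOME x. x \<in> D \<inter> ball c M)" for D
  have pt: "pt D \<in> D \<inter> ball c M" if "D \<in> Ch" for D
    unfolding pt_def by (rule someI_ex) (use that in \<open>auto simp: Ch_def\<close>)
  define sig where "sig D = restrict (\<lambda>psi. sgn (aff_eval psi (pt D))) Phi" for D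
  have "inj_on sig Ch"
  proof (rule inj_onI)
    fix D D' assume D: "D \<in> Ch" and D': "D' \<in> Ch" and eq: "sig D = sig D'"
    have ch: "chamber R D" "chamber R D'" using D D' by (auto simp: Ch_def)
    have "pt D' \<in> sign_class (pt D)" unfolding sign_class_def
    proof (intro CollectI ballI)
      fix psi assume psi: "psi \<in> affine_roots R"
      show "sgn (aff_eval psi (pt D')) = sgn (aff_eval psi (pt D))"
      proof (cases "psi \<in> Phi")
        case True
        then show ?thesis using fun_cong[OF eq, of psi] by (simp add: sig_def)
      next
        case False
        then have "\<forall>z\<in>ball c M. aff_eval psi z \<noteq> 0" using psi by (auto simp: Phi_def hyp_def)
        then show ?thesis using sgn_aff_eval_eq_on_connected[of "ball c M"] pt D D' by auto
      qed
    qed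
    then have "pt D' \<in> D" using chamber_eq_sign_class[OF ch(1)] pt[OF D] by auto
    then show "D = D'" using chamber_eqI[OF ch] pt[OF D'] by blast
  qed
  moreover have sg: "sgn t \<in> {-1, 0, 1::real}" for t by (simp add: sgn_if)
  then have "sig ` Ch \<subseteq> Phi \<rightarrow>\<^sub>E {-1, 0, 1}"
    unfolding sig_def image_subset_iff restrict_PiE_iff by blast
  moreover have "finite (Phi \<rightarrow>\<^sub>E {-1, 0, 1::real})" using \<open>finite Phi\<close> by (intro finite_PiE) auto
  ultimately have "finite Ch" by (meson finite_subset inj_on_finite)
  then show ?thesis by (simp add: Ch_def)
qed

text \<open>The vectors 2a/(a\<bullet>a), a \<in> R, span the space and lie in the coweight lattice, since the Cartan
  integers are integral.\<close>
lemma coweight_lattice_cocompact: "\<exists>M. \<forall>x. \<exists>v. in_coweight_lattice v \<and> norm (x - v) \<le> M"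
proof -
  define co where "co a = (2 / (a \<bullet> a)) *\<^sub>R a" for a :: 'a
  define M where "M = (\<Sum>a\<in>R. norm (co a))"
  have "\<exists>v. in_coweight_lattice v \<and> norm (x - v) \<le> M" for x
  proof -
    obtain u where u: "x = (\<Sum>a\<in>R. u a *\<^sub>R a)"
      using span_roots span_finite[OF finite_roots] by auto
    define c where "c a = u a * (a \<bullet> a) / 2" for a
    have "x = (\<Sum>a\<in>R. c a *\<^sub>R co a)"
      unfolding u using zero_notin_roots by (intro sum.cong) (auto simp: c_def co_def)
    moreover define v where "v = (\<Sum>a\<in>R. of_int \<lfloor>c a\<rfloor> *\<^sub>R co a)"
    ultimately have "x - v = (\<Sum>a\<in>R. frac (c a) *\<^sub>R co a)"
      by (simp add: frac_def sum_subtractf[symmetric] scaleR_diff_left)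
    then have "norm (x - v) \<le> (\<Sum>a\<in>R. norm (frac (c a) *\<^sub>R co a))" by (metis norm_sum)
    also have "\<dots> \<le> M" unfolding M_def
      by (intro sum_mono) (simp add: mult_left_le_one_le frac_lt_1 less_imp_le)
    finally have "norm (x - v) \<le> M" .
    moreover have "in_coweight_lattice v" unfolding in_coweight_lattice_def
    proof
      fix b assume b: "b \<in> R"
      have "b \<bullet> co a \<in> \<int>" if "a \<in> R" for a
        using cartan_integer[OF that b] by (simp add: co_def)
      then show "b \<bullet> v \<in> \<int>" by (simp add: v_def inner_sum_right Ints_sum)
    qed
    ultimately show ?thesis by blast
  qed
  then show ?thesis by blast
qed

text \<open>Up to translations by the coweight lattice there are only finitely many chambers.\<close>
lemma chamber_uniform_inradius: "\<exists>r>0. \<forall>D. chamber R D \<longrightarrow> (\<exists>c. ball c r \<subseteq> D)"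
proof -
  obtain M where M: "\<And>x. \<exists>v. in_coweight_lattice v \<and> norm (x - v) \<le> M"
    using coweight_lattice_cocompact by blast
  define F where "F = {D. chamber R D \<and> D \<inter> ball 0 (M + 1) \<noteq> {}}"
  have "\<forall>D\<in>F. \<exists>cr. snd cr > 0 \<and> ball (fst cr) (snd cr) \<subseteq> D"
  proof
    fix D assume "D \<in> F"
    then have D: "chamber R D" by (simp add: F_def)
    obtain p where "p \<in> D" using chamber_nonempty[OF D] by blast
    then obtain e where "e > 0" "ball p e \<subseteq> D" using open_chamber[OF D] openE by blast
    then show "\<exists>cr. snd cr > 0 \<and> ball (fst cr) (snd cr) \<subseteq> D" by (intro exI[of _ "(p, e)"]) auto
  qed
  then obtain cr where cr: "\<forall>D\<in>F. snd (cr D) > 0 \<and> ball (fst (cr D)) (snd (cr D)) \<subseteq> D"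
    by (rule bchoice[THEN exE]) blast
  define r where "r = Min (insert 1 (snd ` cr ` F))"
  have fin: "finite F" unfolding F_def by (rule finite_chambers_meeting_ball)
  have r: "r > 0" "\<forall>D\<in>F. r \<le> snd (cr D)" unfolding r_def using fin cr by auto
  have "\<exists>c. ball c r \<subseteq> D" if D: "chamber R D" for D
  proof -
    obtain p where p: "p \<in> D" using chamber_nonempty[OF D] by blast
    obtain v where v: "in_coweight_lattice v" "norm (p - v) \<le> M" using M by blast
    define D' where "D' = (+) (- v) ` D"
    have "- v + p \<in> D' \<inter> ball 0 (M + 1)"
      using p v(2) by (auto simp: D'_def dist_norm norm_minus_commute)
    then have D'F: "D' \<in> F"
      unfolding F_def D'_def using chamber_translate[OF in_coweight_lattice_uminus[OF v(1)] D] by blast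
    have "ball (v + fst (cr D')) r \<subseteq> D"
    proof
      fix y assume "y \<in> ball (v + fst (cr D')) r"
      then have "- v + y \<in> ball (fst (cr D')) (snd (cr D'))"
        using r(2) D'F by (auto simp: dist_norm algebra_simps)
      then have "- v + y \<in> D'" using cr D'F by blast
      then show "y \<in> D" by (auto simp: D'_def)
    qed
    then show ?thesis by blast
  qed
  then show ?thesis using r(1) by blast
qed

section \<open>Heights and reflections\<close>

lemma aff_refl_affine_root:
  assumes psi: "psi \<in> affine_roots R" and phi: "phi \<in> affine_roots R"
  shows "\<exists>phi'\<in>affine_roots R. \<forall>x. aff_eval phi (aff_refl psi x) = aff_eval phi' x"
proof -
  define a where "a = fst psi"
  define b where "b = fst phi"
  have a: "a \<in> R" "a \<bullet> a \<noteq> 0" and b: "b \<in> R"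
    using psi phi affine_root_grad_nonzero[OF psi] by (simp_all add: a_def b_def)
  define k where "k = 2 * (b \<bullet> a) / (a \<bullet> a)"
  obtain j where j: "k = of_int j" using cartan_integer[OF a(1) b] by (auto simp: k_def elim: Ints_cases)
  define phi' where "phi' = (b - k *\<^sub>R a, snd phi - j * snd psi)"
  have "phi' \<in> affine_roots R" using reflect_root[OF a(1) b] by (simp add: phi'_def k_def)
  moreover have "aff_eval phi (aff_refl psi x) = aff_eval phi' x" for x
  proof -
    have "aff_eval phi (aff_refl psi x)
        = b \<bullet> x - (2 * aff_eval psi x / (a \<bullet> a)) * (b \<bullet> a) + of_int (snd phi)"
      by (simp add: aff_refl_def aff_eval_def b_def a_def inner_diff_right)
    also have "(2 * aff_eval psi x / (a \<bullet> a)) * (b \<bullet> a) = k * aff_eval psi x"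
      using a(2) by (simp add: k_def field_simps)
    finally show ?thesis using j by (simp add: phi'_def aff_eval_def a_def inner_diff_left algebra_simps)
  qed
  ultimately show ?thesis by blast
qed

lemma aff_refl_notin_walls:
  assumes psi: "psi \<in> affine_roots R" and x: "x \<notin> walls"
  shows "aff_refl psi x \<notin> walls"
proof
  assume "aff_refl psi x \<in> walls"
  then obtain phi where phi: "phi \<in> affine_roots R" "aff_eval phi (aff_refl psi x) = 0"
    by (auto simp: mem_walls)
  then obtain phi' where "phi' \<in> affine_roots R" "aff_eval phi' x = 0"
    using aff_refl_affine_root[OF psi phi(1)] by auto
  then show False using x by (auto simp: mem_walls)
qed

definition separating_walls :: "'a \<Rightarrow> 'a \<Rightarrow> 'a set set" where
  "separating_walls x y = {hyp phi | phi. phi \<in> affine_roots R \<and> aff_eval phi x * aff_eval phi y < 0}"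

lemma finite_separating_walls: "finite (separating_walls x y)"
proof -
  have "separating_walls x y \<subseteq> hyp ` {phi \<in> affine_roots R. hyp phi \<inter> closed_segment x y \<noteq> {}}"
  proof
    fix H assume "H \<in> separating_walls x y"
    then obtain phi where phi: "phi \<in> affine_roots R" "H = hyp phi" "aff_eval phi x * aff_eval phi y < 0"
      by (auto simp: separating_walls_def)
    then consider "aff_eval phi x \<le> 0" "0 \<le> aff_eval phi y" | "aff_eval phi y \<le> 0" "0 \<le> aff_eval phi x"
      by (force simp: mult_less_0_iff)
    then have "\<exists>z\<in>closed_segment x y. aff_eval phi z = 0"
      by cases (use aff_eval_zero_on_connected[OF connected_segment] ends_in_segment in blast)+
    then show "H \<in> hyp ` {phi \<in> affine_roots R. hyp phi \<inter> closed_segment x y \<noteq> {}}"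
      using phi by (auto simp: hyp_def)
  qed
  then show ?thesis
    using finite_affine_roots_meeting[OF bounded_closed_segment] finite_subset by blast
qed

lemma ht_eq_card_separating_walls:
  assumes C0: "chamber R C0" "x \<in> C0" and D: "connected D" "D \<subseteq> - walls" "w \<in> D"
  shows "ht R C0 D = card (separating_walls x w)"
proof -
  have "separates phi C0 D \<longleftrightarrow> aff_eval phi x * aff_eval phi w < 0" if "phi \<in> affine_roots R" for phi
  proof (rule separates_iff_points[OF connected_chamber[OF C0(1)] D(1) C0(2) D(3)])
    show "\<forall>z\<in>C0. aff_eval phi z \<noteq> 0" using chamber_aff_eval_nonzero[OF C0(1) that] by blast
    show "\<forall>z\<in>D. aff_eval phi z \<noteq> 0" using D(2) that by (auto simp: mem_walls)
  qed
  then have "{H. \<exists>psi\<in>affine_roots R. H = hyp psi \<and> separates psi C0 D} = separating_walls x w"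
    unfolding separating_walls_def by blast
  then show ?thesis by (simp add: ht_def)
qed

lemma separating_walls_aff_refl:
  assumes psi: "psi \<in> affine_roots R"
    and U: "connected U" "w \<in> U" "aff_refl psi w \<in> U"
    and isolated: "\<forall>phi\<in>affine_roots R. hyp phi \<inter> U \<noteq> {} \<longrightarrow> hyp phi = hyp psi"
    and same_side: "aff_eval psi x * aff_eval psi w > 0"
  shows "separating_walls x (aff_refl psi w) = insert (hyp psi) (separating_walls x w)"
    and "hyp psi \<notin> separating_walls x w"
proof -
  let ?w' = "aff_refl psi w"
  have other: "aff_eval phi x * aff_eval phi ?w' < 0 \<longleftrightarrow> aff_eval phi x * aff_eval phi w < 0"
    if "phi \<in> affine_roots R" "hyp phi \<noteq> hyp psi" for phi
  proof -
    have "\<forall>z\<in>U. aff_eval phi z \<noteq> 0" using isolated that by (auto simp: hyp_def)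
    then have "sgn (aff_eval phi ?w') = sgn (aff_eval phi w)"
      using sgn_aff_eval_eq_on_connected U by blast
    then show ?thesis by (rule mult_less_0_iff_sgn_eq)
  qed
  have same: "aff_eval phi x * aff_eval phi ?w' < 0 \<and> \<not> aff_eval phi x * aff_eval phi w < 0"
    if "phi \<in> affine_roots R" "hyp phi = hyp psi" for phi
    using aff_eval_mult_aff_refl_same_hyp[OF affine_root_grad_nonzero[OF psi]
        affine_root_grad_nonzero[OF that(1)] that(2) same_side] by simp
  show "hyp psi \<notin> separating_walls x w"
    using same by (auto simp: separating_walls_def)
  show "separating_walls x ?w' = insert (hyp psi) (separating_walls x w)"
  proof (intro equalityI subsetI)
    fix H assume "H \<in> separating_walls x ?w'"
    then obtain phi where phi: "phi \<in> affine_roots R" "H = hyp phi" "aff_eval phi x * aff_eval phi ?w' < 0"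
      by (auto simp: separating_walls_def)
    show "H \<in> insert (hyp psi) (separating_walls x w)"
    proof (cases "hyp phi = hyp psi")
      case False
      then have "aff_eval phi x * aff_eval phi w < 0" using other[OF phi(1) False] phi(3) by simp
      then show ?thesis using phi(1,2) unfolding separating_walls_def by blast
    qed (simp add: phi(2))
  next
    fix H assume "H \<in> insert (hyp psi) (separating_walls x w)"
    then consider "H = hyp psi"
      | phi where "phi \<in> affine_roots R" "H = hyp phi" "aff_eval phi x * aff_eval phi w < 0"
      by (auto simp: separating_walls_def)
    then show "H \<in> separating_walls x ?w'"
    proof cases
      case 1
      then show ?thesis using same[OF psi refl] psi unfolding separating_walls_def by blast
    next
      case (2 phi)
      then have "hyp phi \<noteq> hyp psi" using same by blast
      then show ?thesis using 2 other unfolding separating_walls_def by blast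
    qed
  qed
qed

lemma ht_aff_refl_isolated_wall:
  assumes C0: "chamber R C0" and D: "chamber R D" and psi: "psi \<in> affine_roots R"
    and z: "z \<in> hyp psi" "z \<in> closure D" and "\<rho> > 0"
    and isolated: "\<forall>phi\<in>affine_roots R. hyp phi \<inter> ball z \<rho> \<noteq> {} \<longrightarrow> hyp phi = hyp psi"
    and nsep: "\<not> separates psi C0 D"
  shows "ht R C0 (aff_refl psi ` D) = ht R C0 D + 1"
proof -
  have grad: "fst psi \<noteq> 0" using psi by (rule affine_root_grad_nonzero)
  obtain x where x: "x \<in> C0" using chamber_nonempty[OF C0] by blast
  obtain w where w: "w \<in> D" "dist w z < \<rho>" using z(2) \<open>\<rho> > 0\<close> closure_approachable by blast
  have "dist (aff_refl psi w) z = dist w z"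
    using dist_aff_refl[OF grad, of w z] aff_refl_fixes_hyp[OF grad z(1)] by simp
  then have U: "w \<in> ball z \<rho>" "aff_refl psi w \<in> ball z \<rho>" using w by (auto simp: dist_commute)
  have "aff_eval psi x * aff_eval psi w \<noteq> 0"
    using chamber_aff_eval_nonzero[OF C0 psi x] chamber_aff_eval_nonzero[OF D psi w(1)] by simp
  moreover have "\<not> aff_eval psi x * aff_eval psi w < 0"
    using nsep separates_iff_points[OF connected_chamber[OF C0]
        connected_chamber[OF D] x w(1)] chamber_aff_eval_nonzero[OF C0 psi] chamber_aff_eval_nonzero[OF D psi]
    by blast
  ultimately have "aff_eval psi x * aff_eval psi w > 0" by linarith
  note walls = separating_walls_aff_refl[OF psi connected_ball U isolated this]
  have "ht R C0 (aff_refl psi ` D) = card (separating_walls x (aff_refl psi w))"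
    using aff_refl_notin_walls[OF psi] chamber_subset[OF D] w(1)
    by (intro ht_eq_card_separating_walls[OF C0 x] connected_continuous_image
        continuous_on_aff_refl[OF grad] connected_chamber[OF D]) auto
  moreover have "ht R C0 D = card (separating_walls x w)"
    by (rule ht_eq_card_separating_walls[OF C0 x connected_chamber[OF D] chamber_subset[OF D] w(1)])
  ultimately show ?thesis using walls finite_separating_walls by simp
qed

section \<open>Leaving a chamber along a generic ray\<close>

lemma isolated_wall_nbhd:
  assumes phi: "phi \<in> affine_roots R"
    and unique: "\<forall>psi\<in>affine_roots R. z \<in> hyp psi \<longrightarrow> hyp psi = hyp phi"
  shows "\<exists>\<rho>>0. \<forall>psi\<in>affine_roots R. hyp psi \<inter> ball z \<rho> \<noteq> {} \<longrightarrow> hyp psi = hyp phi"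
proof -
  define Far where "Far = {psi \<in> affine_roots R. hyp psi \<inter> ball z 1 \<noteq> {} \<and> z \<notin> hyp psi}"
  have "finite Far" unfolding Far_def
    by (rule finite_subset[OF _ finite_affine_roots_meeting[OF bounded_ball[of z 1]]]) blast
  define g where "g psi = \<bar>aff_eval psi z\<bar> / norm (fst psi)" for psi
  define \<rho> where "\<rho> = Min (insert 1 (g ` Far))"
  have "g psi > 0" if "psi \<in> Far" for psi
    using that affine_root_grad_nonzero by (auto simp: Far_def g_def hyp_def)
  then have \<rho>: "\<rho> > 0" "\<rho> \<le> 1" "\<forall>psi\<in>Far. \<rho> \<le> g psi"
    unfolding \<rho>_def using \<open>finite Far\<close> by auto
  have "hyp psi = hyp phi" if psi: "psi \<in> affine_roots R" and ne: "hyp psi \<inter> ball z \<rho> \<noteq> {}" for psi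
  proof (cases "z \<in> hyp psi")
    case False
    obtain x where x: "x \<in> hyp psi" "dist z x < \<rho>" using ne by auto
    have na: "norm (fst psi) > 0" using affine_root_grad_nonzero[OF psi] by simp
    have "psi \<in> Far" using psi False x \<rho>(2) by (auto simp: Far_def)
    have "aff_eval psi z = fst psi \<bullet> (z - x)" using x(1) aff_eval_diff[of psi z x] by (simp add: hyp_def)
    then have "\<bar>aff_eval psi z\<bar> \<le> norm (fst psi) * dist z x"
      using Cauchy_Schwarz_ineq2[of "fst psi" "z - x"] by (simp add: dist_norm)
    also have "\<dots> < norm (fst psi) * g psi"
      using x(2) \<rho>(3) \<open>psi \<in> Far\<close> na by (intro mult_strict_left_mono) force+
    also have "\<dots> = \<bar>aff_eval psi z\<bar>" using na by (simp add: g_def)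
    finally show ?thesis by simp
  qed (use unique psi in blast)
  then show ?thesis using \<rho>(1) by blast
qed

lemma half_ball_subset_chamber:
  assumes D: "chamber R D" and psi: "psi \<in> affine_roots R" and w: "w \<in> D" "w \<in> ball z \<rho>"
    and isolated: "\<forall>phi\<in>affine_roots R. hyp phi \<inter> ball z \<rho> \<noteq> {} \<longrightarrow> hyp phi = hyp psi"
  shows "ball z \<rho> \<inter> {x. 0 < aff_eval psi w * aff_eval psi x} \<subseteq> D" (is "?H \<subseteq> D")
proof -
  have "?H \<subseteq> - walls"
  proof
    fix x assume x: "x \<in> ?H"
    show "x \<in> - walls"
    proof
      assume "x \<in> walls"
      then obtain phi where phi: "phi \<in> affine_roots R" "x \<in> hyp phi" by (auto simp: walls_def)
      then have "hyp phi \<inter> ball z \<rho> \<noteq> {}" using x by blast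
      then have "hyp phi = hyp psi" using isolated phi(1) by blast
      then show False using phi(2) x by (simp add: hyp_def)
    qed
  qed
  moreover have "0 < aff_eval psi w * aff_eval psi w"
    using chamber_aff_eval_nonzero[OF D psi w(1)] not_real_square_gt_zero by blast
  then have "w \<in> ?H" using w(2) by simp
  ultimately show ?thesis
    using chamber_eq_sign_class[OF D w(1)] connected_subset_sign_class
    by (metis convex_Int convex_ball convex_aff_eval_pos convex_connected)
qed

lemma is_face_hyp_if_isolated:
  assumes D: "chamber R D" and psi: "psi \<in> affine_roots R" and z: "z \<in> hyp psi" "z \<in> closure D"
    and "\<rho> > 0" and isolated: "\<forall>phi\<in>affine_roots R. hyp phi \<inter> ball z \<rho> \<noteq> {} \<longrightarrow> hyp phi = hyp psi"
  shows "is_face_hyp R D psi"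
proof -
  have grad: "fst psi \<noteq> 0" using psi by (rule affine_root_grad_nonzero)
  obtain w where w: "w \<in> D" "w \<in> ball z \<rho>"
    using z(2) \<open>\<rho> > 0\<close> closure_approachable by (metis dist_commute mem_ball)
  have "aff_eval psi w \<noteq> 0" using chamber_aff_eval_nonzero[OF D psi w(1)] .
  then have sub: "hyp psi \<inter> ball z \<rho> \<subseteq> closure D"
    using hyp_Int_open_subset_closure_side[OF grad _ open_ball]
      closure_mono[OF half_ball_subset_chamber[OF D psi w isolated]] by blast
  have hyp_dim: "aff_dim (hyp psi) = int DIM('a) - 1"
    using grad by (simp add: hyp_eq)
  have "aff_dim (hyp psi \<inter> ball z \<rho>) = aff_dim (hyp psi)"
    using z(1) \<open>\<rho> > 0\<close> by (intro aff_dim_convex_Int_open) (auto simp: hyp_eq convex_hyperplane)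
  moreover have "aff_dim (hyp psi \<inter> ball z \<rho>) \<le> aff_dim (hyp psi \<inter> closure D)"
    using sub by (intro aff_dim_subset) blast
  moreover have "aff_dim (hyp psi \<inter> closure D) \<le> aff_dim (hyp psi)" by (intro aff_dim_subset) blast
  ultimately show ?thesis using psi hyp_dim by (simp add: is_face_hyp_def)
qed

text \<open>The generic ray from C0 through a point of D leaves D through a single wall, near a point of
  which D lies on the same side as C0; reflecting in it raises the height.\<close>
lemma ray_exits_through_cface:
  assumes C0: "chamber R C0" "x0 \<in> C0" and D: "chamber R D" "x0 \<notin> D"
    and U: "open U" "U \<noteq> {}" "U \<subseteq> D"
  shows "\<exists>y\<in>U. \<exists>s>1. \<exists>phi. x0 + s *\<^sub>R (y - x0) \<in> hyp phi \<inter> closure D \<and>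
                          hyp phi \<inter> closure D \<in> cfaces R C0 D"
proof -
  define Phi where "Phi = {phi \<in> affine_roots R. hyp phi \<inter> closure D \<noteq> {}}"
  have "finite Phi"
    unfolding Phi_def using bounded_chamber[OF D(1)] by (intro finite_affine_roots_meeting bounded_closure)
  moreover have "\<forall>phi\<in>Phi. x0 \<notin> hyp phi"
    unfolding Phi_def hyp_def using chamber_aff_eval_nonzero[OF C0(1) _ C0(2)] by blast
  ultimately have "\<exists>y\<in>U. \<forall>phi\<in>Phi. \<forall>phi'\<in>Phi. \<forall>s.
      x0 + s *\<^sub>R (y - x0) \<in> hyp phi \<inter> hyp phi' \<longrightarrow> hyp phi = hyp phi'"
    by (rule exists_generic_ray[OF _ _ U(1,2)])
  then obtain y where y: "y \<in> U" and generic: "\<forall>phi\<in>Phi. \<forall>phi'\<in>Phi. \<forall>s.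
      x0 + s *\<^sub>R (y - x0) \<in> hyp phi \<inter> hyp phi' \<longrightarrow> hyp phi = hyp phi'"
    by (rule bexE)
  obtain s where s: "s > 1" "x0 + s *\<^sub>R (y - x0) \<in> frontier D"
    using ray_exits_through_frontier[OF open_chamber[OF D(1)] bounded_chamber[OF D(1)] _ D(2)] y U(3)
    by blast
  define z where "z = x0 + s *\<^sub>R (y - x0)"
  have z: "z \<in> closure D" "z \<in> walls"
    using s(2) frontier_chamber_subset_walls[OF D(1)] by (auto simp: z_def frontier_def)
  obtain phi where phi: "phi \<in> affine_roots R" "z \<in> hyp phi" using z(2) by (auto simp: walls_def)
  have "\<forall>psi\<in>affine_roots R. z \<in> hyp psi \<longrightarrow> hyp psi = hyp phi"
    using generic phi z(1) unfolding Phi_def z_def by blast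
  then obtain \<rho> where \<rho>: "\<rho> > 0"
    and isolated: "\<forall>psi\<in>affine_roots R. hyp psi \<inter> ball z \<rho> \<noteq> {} \<longrightarrow> hyp psi = hyp phi"
    using isolated_wall_nbhd[OF phi(1)] by blast
  have "aff_eval phi x0 * aff_eval phi y \<ge> 0"
    using phi(2) s(1) by (intro aff_eval_nonneg_before_ray_zero) (auto simp: z_def hyp_def)
  then have "\<not> separates phi C0 D"
    using separates_iff_points[OF connected_chamber[OF C0(1)] connected_chamber[OF D(1)] C0(2)]
      chamber_aff_eval_nonzero[OF C0(1) phi(1)] chamber_aff_eval_nonzero[OF D(1) phi(1)] y U(3)
    by (metis not_le subsetD)
  then have "ht R C0 (aff_refl phi ` D) = ht R C0 D + 1"
    by (rule ht_aff_refl_isolated_wall[OF C0(1) D(1) phi z(1) \<rho> isolated])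
  then have "hyp phi \<inter> closure D \<in> cfaces R C0 D"
    using is_face_hyp_if_isolated[OF D(1) phi z(1) \<rho> isolated] unfolding cfaces_def by blast
  then show ?thesis using y s(1) phi(2) z(1) unfolding z_def by blast
qed

lemma chamber_near_if_cfaces_in:
  assumes C0: "chamber R C0" "x0 \<in> C0" and D: "chamber R D" and r: "r > 0" "ball c r \<subseteq> D"
    and diam: "\<forall>x\<in>closure D. \<forall>y\<in>closure D. dist x y \<le> \<delta>"
    and cfaces: "\<forall>F\<in>cfaces R C0 D. \<exists>psi\<in>P. F \<subseteq> hyp psi" and P: "P \<subseteq> affine_roots R"
    and K: "\<forall>psi\<in>P. \<bar>aff_eval psi x0\<bar> / norm (fst psi) \<le> K" "K \<ge> 0"
  shows "\<exists>y\<in>D. dist x0 y * (r / 2) \<le> \<delta> * (\<delta> + K)"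
proof -
  obtain p where "p \<in> D" using chamber_nonempty[OF D] by blast
  then have "dist p p \<le> \<delta>" using diam closure_subset by blast
  then have "\<delta> \<ge> 0" by simp
  show ?thesis
  proof (cases "x0 \<in> D")
    case True
    then show ?thesis using \<open>\<delta> \<ge> 0\<close> K(2) by (intro bexI[of _ x0]) auto
  next
    case False
    have "ball c (r / 2) \<subseteq> ball c r" using r(1) by (intro subset_ball) simp
    then have half: "ball c (r / 2) \<subseteq> D" using r(2) by blast
    moreover have "ball c (r / 2) \<noteq> {}" using r(1) by simp
    ultimately obtain y s phi where y: "y \<in> ball c (r / 2)" and s: "s > 1"
      and z: "x0 + s *\<^sub>R (y - x0) \<in> hyp phi \<inter> closure D" "hyp phi \<inter> closure D \<in> cfaces R C0 D"
      using ray_exits_through_cface[OF C0 D False open_ball] by blast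
    obtain psi where psi: "psi \<in> P" "hyp phi \<inter> closure D \<subseteq> hyp psi" using cfaces z(2) by blast
    have psiA: "psi \<in> affine_roots R" using P psi(1) by blast
    have "ball y (r / 2) \<subseteq> ball c r"
    proof
      fix x assume "x \<in> ball y (r / 2)"
      then show "x \<in> ball c r" using y dist_triangle[of c x y] by simp
    qed
    then have "ball y (r / 2) \<subseteq> - walls" using r(2) chamber_subset[OF D] by blast
    then have miss: "hyp psi \<inter> ball y (r / 2) = {}" using psiA by (auto simp: walls_def)
    have yD: "y \<in> D" using half y by blast
    have "dist y (x0 + s *\<^sub>R (y - x0)) \<le> \<delta>" using yD z(1) diam closure_subset by blast
    then have "dist x0 y * (r / 2) \<le> \<delta> * (\<delta> + \<bar>aff_eval psi x0\<bar> / norm (fst psi))"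
      using z(1) psi(2) by (intro ray_through_hyp_dist_bound[OF affine_root_grad_nonzero[OF psiA] miss s]) auto
    also have "\<dots> \<le> \<delta> * (\<delta> + K)" using K(1) psi(1) \<open>\<delta> \<ge> 0\<close> by (simp add: mult_left_mono)
    finally show ?thesis using yD by blast
  qed
qed

end

theorem proposition2p6:
  fixes R :: "'a::euclidean_space set" and C0 :: "'a set" and X :: "('a \<times> int) list"
  assumes "reduced_irreducible_root_system R"
    and "chamber R C0"
    and "permissible R X"
  shows "finite {D. incident R X D \<and>
                  cfaces R C0 D = (\<lambda>psi. hyp psi \<inter> closure D) ` set X}"
proof -
  interpret root_system R by (rule root_system.intro) fact
  obtain r where r: "r > 0" "\<And>D. chamber R D \<Longrightarrow> \<exists>c. ball c r \<subseteq> D"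
    using chamber_uniform_inradius by blast
  obtain \<delta> where \<delta>: "\<And>D. chamber R D \<Longrightarrow> \<forall>x\<in>closure D. \<forall>y\<in>closure D. dist x y \<le> \<delta>"
    using chamber_closure_diameter_bound by blast
  obtain x0 where x0: "x0 \<in> C0" using chamber_nonempty[OF assms(2)] by blast
  define K where "K = Max (insert 0 ((\<lambda>psi. \<bar>aff_eval psi x0\<bar> / norm (fst psi)) ` set X))"
  have K: "\<forall>psi\<in>set X. \<bar>aff_eval psi x0\<bar> / norm (fst psi) \<le> K" "K \<ge> 0"
    unfolding K_def by auto
  have X: "set X \<subseteq> affine_roots R" using assms(3) by (simp add: permissible_def)
  have "{D. incident R X D \<and> cfaces R C0 D = (\<lambda>psi. hyp psi \<inter> closure D) ` set X}
      \<subseteq> {D. chamber R D \<and> D \<inter> ball x0 (2 * \<delta> * (\<delta> + K) / r + 1) \<noteq> {}}"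
  proof clarify
    fix D assume "incident R X D" and cf: "cfaces R C0 D = (\<lambda>psi. hyp psi \<inter> closure D) ` set X"
    then have D: "chamber R D" by (simp add: incident_def)
    obtain c where c: "ball c r \<subseteq> D" using r(2)[OF D] by blast
    have "\<forall>F\<in>cfaces R C0 D. \<exists>psi\<in>set X. F \<subseteq> hyp psi" using cf by auto
    then obtain y where "y \<in> D" "dist x0 y * (r / 2) \<le> \<delta> * (\<delta> + K)"
      using chamber_near_if_cfaces_in[OF assms(2) x0 D r(1) c \<delta>[OF D] _ X K] by blast
    then have "y \<in> D \<inter> ball x0 (2 * \<delta> * (\<delta> + K) / r + 1)"
      using r(1) by (simp add: field_simps)
    then show "chamber R D \<and> D \<inter> ball x0 (2 * \<delta> * (\<delta> + K) / r + 1) \<noteq> {}" using D by blast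
  qed
  then show ?thesis using finite_chambers_meeting_ball finite_subset by blast
qed

end
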